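(* Let $q$ be a self-join-free Boolean conjunctive query, let $q_0\subseteq q$, let $\mathbf{db}$ be a database, and let $\mathbf{o}$ be a garbage set for $q_0$ in $\mathbf{db}$. Then every garbage set for $q_0$ in $\mathbf{db}\setminus\mathbf{o}$ is empty if and only if $\mathbf{o}$ is the maximal (with respect to $\subseteq$) garbage set for $q_0$ in $\mathbf{db}$.
   Context: Every relation name has a signature $[n,k]$ ($1\le k\le n$; primary-key positions $1,\dots,k$) and a mode in $\{\mathsf{c},\mathsf{i}\}$. Facts are variable-free atoms; facts are key-equal if same relation name and same primary-key values. A database is a finite set of facts with no two distinct key-equal facts of mode $\mathsf{c}$, all of whose relation names occur in $q$. The block of a fact $A$ in $\mathbf{db}$ is the set of facts of $\mathbf{db}$ key-equal to $A$. A repair of a set of facts is a maximal subset without two distinct key-equal facts. A self-join-free Boolean conjunctive query is a finite set of atoms with distinct relation names; for a fact $A$, $\mathrm{atom}(A)$ is the atom of $q$ with the same relation name. A subset $\mathbf{o}\subseteq\mathbf{db}$ is a garbage set for $q_0$ in $\mathbf{db}$ if (1) for every $A\in\mathbf{o}$, $\mathrm{atom}(A)\in q_0$ and the block of $A$ in $\mathbf{db}$ is included in $\mathbf{o}$; and (2) there is a repair $\mathbf{r}$ of $\mathbf{o}$ such that for every valuation $\theta$ of the variables of $q$, if $\theta(q)\subseteq(\mathbf{db}\setminus\mathbf{o})\cup\mathbf{r}$ then $\theta(q_0)\cap\mathbf{r}=\emptyset$. Garbage sets are closed under union, so a unique maximal garbage set exists. *)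

theory Defs
  imports Main
begin

(* Modes of relation names: c (consistent) and i (possibly inconsistent). *)
datatype mode = ModeC | ModeI

datatype ('v, 'c) trm = Var 'v | Const 'c

datatype ('r, 'v, 'c) atom = Atom (arel: 'r) (aargs: "('v, 'c) trm list")
datatype ('r, 'c) fact = Fact (frel: 'r) (fargs: "'c list")

(* A schema: sig R = (n, k) is the signature [n,k] of R, md R its mode.
   Every relation name has a signature with 1 <= k <= n. *)
definition schema_ok :: "('r \<Rightarrow> nat \<times> nat) \<Rightarrow> bool" where
  "schema_ok sig \<longleftrightarrow> (\<forall>R. 1 \<le> snd (sig R) \<and> snd (sig R) \<le> fst (sig R))"

definition fact_wf :: "('r \<Rightarrow> nat \<times> nat) \<Rightarrow> ('r, 'c) fact \<Rightarrow> bool" where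
  "fact_wf sig A \<longleftrightarrow> length (fargs A) = fst (sig (frel A))"

definition atom_wf :: "('r \<Rightarrow> nat \<times> nat) \<Rightarrow> ('r, 'v, 'c) atom \<Rightarrow> bool" where
  "atom_wf sig a \<longleftrightarrow> length (aargs a) = fst (sig (arel a))"

definition key_equal :: "('r \<Rightarrow> nat \<times> nat) \<Rightarrow> ('r, 'c) fact \<Rightarrow> ('r, 'c) fact \<Rightarrow> bool" where
  "key_equal sig A B \<longleftrightarrow> frel A = frel B \<and>
     take (snd (sig (frel A))) (fargs A) = take (snd (sig (frel B))) (fargs B)"

definition sjf_bcq :: "('r \<Rightarrow> nat \<times> nat) \<Rightarrow> ('r, 'v, 'c) atom set \<Rightarrow> bool" where
  "sjf_bcq sig q \<longleftrightarrow> finite q \<and> (\<forall>a\<in>q. atom_wf sig a) \<and>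
     (\<forall>a\<in>q. \<forall>b\<in>q. arel a = arel b \<longrightarrow> a = b)"

definition database ::
  "('r \<Rightarrow> nat \<times> nat) \<Rightarrow> ('r \<Rightarrow> mode) \<Rightarrow> ('r, 'v, 'c) atom set \<Rightarrow> ('r, 'c) fact set \<Rightarrow> bool" where
  "database sig md q db \<longleftrightarrow> finite db \<and> (\<forall>A\<in>db. fact_wf sig A) \<and>
     (\<forall>A\<in>db. \<forall>B\<in>db. key_equal sig A B \<and> md (frel A) = ModeC \<and> A \<noteq> B \<longrightarrow> False) \<and>
     (\<forall>A\<in>db. \<exists>a\<in>q. arel a = frel A)"

definition block :: "('r \<Rightarrow> nat \<times> nat) \<Rightarrow> ('r, 'c) fact set \<Rightarrow> ('r, 'c) fact \<Rightarrow> ('r, 'c) fact set" where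
  "block sig db A = {B \<in> db. key_equal sig A B}"

definition consistent :: "('r \<Rightarrow> nat \<times> nat) \<Rightarrow> ('r, 'c) fact set \<Rightarrow> bool" where
  "consistent sig S \<longleftrightarrow> (\<forall>A\<in>S. \<forall>B\<in>S. key_equal sig A B \<longrightarrow> A = B)"

definition repair :: "('r \<Rightarrow> nat \<times> nat) \<Rightarrow> ('r, 'c) fact set \<Rightarrow> ('r, 'c) fact set \<Rightarrow> bool" where
  "repair sig r S \<longleftrightarrow> r \<subseteq> S \<and> consistent sig r \<and>
     (\<forall>r'. r \<subseteq> r' \<and> r' \<subseteq> S \<and> consistent sig r' \<longrightarrow> r' = r)"

definition atom_of :: "('r, 'v, 'c) atom set \<Rightarrow> ('r, 'c) fact \<Rightarrow> ('r, 'v, 'c) atom" where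
  "atom_of q A = (THE a. a \<in> q \<and> arel a = frel A)"

fun trm_val :: "('v \<Rightarrow> 'c) \<Rightarrow> ('v, 'c) trm \<Rightarrow> 'c" where
  "trm_val \<theta> (Var x) = \<theta> x"
| "trm_val \<theta> (Const c) = c"

definition atom_val :: "('v \<Rightarrow> 'c) \<Rightarrow> ('r, 'v, 'c) atom \<Rightarrow> ('r, 'c) fact" where
  "atom_val \<theta> a = Fact (arel a) (map (trm_val \<theta>) (aargs a))"

definition query_val :: "('v \<Rightarrow> 'c) \<Rightarrow> ('r, 'v, 'c) atom set \<Rightarrow> ('r, 'c) fact set" where
  "query_val \<theta> q = atom_val \<theta> ` q"

definition garbage_set ::
  "('r \<Rightarrow> nat \<times> nat) \<Rightarrow> ('r, 'v, 'c) atom set \<Rightarrow> ('r, 'v, 'c) atom set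
   \<Rightarrow> ('r, 'c) fact set \<Rightarrow> ('r, 'c) fact set \<Rightarrow> bool" where
  "garbage_set sig q q0 db g \<longleftrightarrow> g \<subseteq> db \<and>
     (\<forall>A\<in>g. atom_of q A \<in> q0 \<and> block sig db A \<subseteq> g) \<and>
     (\<exists>r. repair sig r g \<and>
        (\<forall>\<theta>. query_val \<theta> q \<subseteq> (db - g) \<union> r \<longrightarrow> query_val \<theta> q0 \<inter> r = {}))"

definition max_garbage_set ::
  "('r \<Rightarrow> nat \<times> nat) \<Rightarrow> ('r, 'v, 'c) atom set \<Rightarrow> ('r, 'v, 'c) atom set
   \<Rightarrow> ('r, 'c) fact set \<Rightarrow> ('r, 'c) fact set \<Rightarrow> bool" where
  "max_garbage_set sig q q0 db g \<longleftrightarrow> garbage_set sig q q0 db g \<and>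
     (\<forall>g'. garbage_set sig q q0 db g' \<longrightarrow> g' \<subseteq> g)"

end

theory Submission
  imports Defs
begin

text \<open>A garbage set is closed under blocks, so it shares no key with the rest of the database, and
  repairs of key-disjoint sets are exactly the unions of repairs of the parts. Hence garbage sets
  compose: if \<open>o\<close> is garbage in \<open>db\<close>, witnessed by the repair \<open>r\<close>, and \<open>o'\<close> is garbage in
  \<open>db \<setminus> o\<close>, witnessed by \<open>r'\<close>, then \<open>r \<union> r'\<close> witnesses that \<open>o \<union> o'\<close> is garbage in \<open>db\<close>:
  a valuation whose image lies in \<open>(db \<setminus> (o \<union> o')) \<union> r \<union> r'\<close> avoids the \<open>q\<^sub>0\<close>-facts of \<open>r\<close>,
  hence by self-join-freeness all of \<open>r\<close>, and so its image lies in \<open>(db \<setminus> o \<setminus> o') \<union> r'\<close>.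
  Conversely, any garbage set \<open>U\<close> of \<open>db\<close> leaves the garbage set \<open>U \<setminus> o\<close> in \<open>db \<setminus> o\<close>.
  The first fact shows that a maximal \<open>o\<close> leaves no garbage behind, the second that an \<open>o\<close>
  leaving no garbage contains every garbage set.\<close>

definition block_closed :: "('r \<Rightarrow> nat \<times> nat) \<Rightarrow> ('r, 'c) fact set \<Rightarrow> ('r, 'c) fact set \<Rightarrow> bool" where
  "block_closed sig db S \<longleftrightarrow> (\<forall>A\<in>S. block sig db A \<subseteq> S)"

definition key_disjoint :: "('r \<Rightarrow> nat \<times> nat) \<Rightarrow> ('r, 'c) fact set \<Rightarrow> ('r, 'c) fact set \<Rightarrow> bool" where
  "key_disjoint sig S T \<longleftrightarrow> (\<forall>A\<in>S. \<forall>B\<in>T. \<not> key_equal sig A B)"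

lemma key_equal_sym: "key_equal sig A B \<Longrightarrow> key_equal sig B A"
  by (auto simp: key_equal_def)

lemma key_disjoint_if_block_closed:
  assumes "block_closed sig db S" and "T \<subseteq> db - S"
  shows "key_disjoint sig S T"
  using assms unfolding block_closed_def key_disjoint_def block_def by blast

lemma block_closed_Diff:
  assumes "block_closed sig db U"
  shows "block_closed sig (db - S) (U - S)"
  using assms unfolding block_closed_def block_def by blast

lemma block_closed_Un:
  assumes "block_closed sig db S" and "block_closed sig (db - S) T"
  shows "block_closed sig db (S \<union> T)"
  using assms unfolding block_closed_def block_def by blast

lemma consistent_subset: "consistent sig r \<Longrightarrow> r' \<subseteq> r \<Longrightarrow> consistent sig r'"
  unfolding consistent_def by blast

lemma consistent_Un:
  assumes "key_disjoint sig S T" and "consistent sig r" "r \<subseteq> S" and "consistent sig r'" "r' \<subseteq> T"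
  shows "consistent sig (r \<union> r')"
  using assms unfolding consistent_def key_disjoint_def by (blast dest: key_equal_sym)

lemma repair_maximal:
  assumes "repair sig r S" and "r \<subseteq> R" and "R \<subseteq> S" and "consistent sig R"
  shows "R = r"
  using assms unfolding repair_def by blast

lemma repair_Un:
  assumes disj: "key_disjoint sig S T" and r: "repair sig r S" and r': "repair sig r' T"
  shows "repair sig (r \<union> r') (S \<union> T)"
proof -
  have sub: "r \<subseteq> S" "r' \<subseteq> T" and cons: "consistent sig r" "consistent sig r'"
    using r r' unfolding repair_def by simp_all
  have "R = r \<union> r'" if R: "r \<union> r' \<subseteq> R" "R \<subseteq> S \<union> T" "consistent sig R" for R
  proof -
    have "R \<inter> S = r"
      using R(1) sub(1) by (intro repair_maximal[OF r] consistent_subset[OF R(3)]) auto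
    moreover have "R \<inter> T = r'"
      using R(1) sub(2) by (intro repair_maximal[OF r'] consistent_subset[OF R(3)]) auto
    ultimately show ?thesis
      using R(2) by blast
  qed
  then show ?thesis
    using sub consistent_Un[OF disj cons(1) sub(1) cons(2) sub(2)] unfolding repair_def by auto
qed

lemma repair_Int:
  assumes disj: "key_disjoint sig S T" and r: "repair sig r (S \<union> T)"
  shows "repair sig (r \<inter> T) T"
proof -
  have sub: "r \<subseteq> S \<union> T" and cons: "consistent sig r"
    using r unfolding repair_def by simp_all
  have "R = r \<inter> T" if R: "r \<inter> T \<subseteq> R" "R \<subseteq> T" "consistent sig R" for R
  proof -
    have "(r \<inter> S) \<union> R = r"
    proof (rule repair_maximal[OF r])
      show "consistent sig ((r \<inter> S) \<union> R)"
        using consistent_Un[OF disj consistent_subset[OF cons] _ R(3) R(2)] by blast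
      show "r \<subseteq> (r \<inter> S) \<union> R" and "(r \<inter> S) \<union> R \<subseteq> S \<union> T"
        using sub R by blast+
    qed
    then show ?thesis
      using R by blast
  qed
  then show ?thesis
    using consistent_subset[OF cons] unfolding repair_def by auto
qed

lemma atom_of_atom_val:
  assumes "sjf_bcq sig q" and "a \<in> q"
  shows "atom_of q (atom_val \<theta> a) = a"
  using assms unfolding atom_of_def atom_val_def sjf_bcq_def by (intro the_equality) auto

lemma query_val_disjoint_if_subquery_disjoint:
  assumes "sjf_bcq sig q" and "\<forall>A\<in>r. atom_of q A \<in> q0" and "query_val \<theta> q0 \<inter> r = {}"
  shows "query_val \<theta> q \<inter> r = {}"
  using assms atom_of_atom_val[OF assms(1)] unfolding query_val_def by fastforce

lemma garbage_setI:
  assumes "repair sig r g"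
    and "g \<subseteq> db" and "\<forall>A\<in>g. atom_of q A \<in> q0" and "block_closed sig db g"
    and "\<And>\<theta>. query_val \<theta> q \<subseteq> (db - g) \<union> r \<Longrightarrow> query_val \<theta> q0 \<inter> r = {}"
  shows "garbage_set sig q q0 db g"
  using assms unfolding garbage_set_def block_closed_def by blast

lemma garbage_setE:
  assumes "garbage_set sig q q0 db g"
  obtains r where "repair sig r g"
    and "g \<subseteq> db" and "\<forall>A\<in>g. atom_of q A \<in> q0" and "block_closed sig db g"
    and "\<And>\<theta>. query_val \<theta> q \<subseteq> (db - g) \<union> r \<Longrightarrow> query_val \<theta> q0 \<inter> r = {}"
proof -
  from assms obtain r where "repair sig r g"
    and "\<forall>\<theta>. query_val \<theta> q \<subseteq> (db - g) \<union> r \<longrightarrow> query_val \<theta> q0 \<inter> r = {}"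
    unfolding garbage_set_def by blast
  with assms show thesis
    by (intro that) (auto simp: garbage_set_def block_closed_def)
qed

lemma garbage_set_Diff:
  assumes S: "block_closed sig db S" and U: "garbage_set sig q q0 db U"
  shows "garbage_set sig q q0 (db - S) (U - S)"
proof -
  obtain r where r: "repair sig r U"
    and U_db: "U \<subseteq> db" and atoms: "\<forall>A\<in>U. atom_of q A \<in> q0" and closed: "block_closed sig db U"
    and avoid: "\<And>\<theta>. query_val \<theta> q \<subseteq> (db - U) \<union> r \<Longrightarrow> query_val \<theta> q0 \<inter> r = {}"
    using U by (rule garbage_setE) (rule that)
  have "key_disjoint sig (U \<inter> S) (U - S)"
    using key_disjoint_if_block_closed[OF S, of "U - S"] U_db unfolding key_disjoint_def by blast
  moreover have "(U \<inter> S) \<union> (U - S) = U" by blast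
  ultimately have "repair sig (r \<inter> (U - S)) (U - S)"
    using repair_Int r by metis
  then show ?thesis
  proof (rule garbage_setI)
    show "U - S \<subseteq> db - S" and "\<forall>A\<in>U - S. atom_of q A \<in> q0"
      using U_db atoms by blast+
    show "block_closed sig (db - S) (U - S)"
      using closed by (rule block_closed_Diff)
    fix \<theta> assume "query_val \<theta> q \<subseteq> (db - S - (U - S)) \<union> r \<inter> (U - S)"
    then have "query_val \<theta> q \<subseteq> (db - U) \<union> r" by blast
    then show "query_val \<theta> q0 \<inter> (r \<inter> (U - S)) = {}"
      using avoid by blast
  qed
qed

lemma garbage_set_Un:
  assumes sjf: "sjf_bcq sig q" and g: "garbage_set sig q q0 db g"
    and g': "garbage_set sig q q0 (db - g) g'"
  shows "garbage_set sig q q0 db (g \<union> g')"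
proof -
  obtain r where r: "repair sig r g"
    and g_db: "g \<subseteq> db" and atoms: "\<forall>A\<in>g. atom_of q A \<in> q0" and closed: "block_closed sig db g"
    and avoid: "\<And>\<theta>. query_val \<theta> q \<subseteq> (db - g) \<union> r \<Longrightarrow> query_val \<theta> q0 \<inter> r = {}"
    using g by (rule garbage_setE) (rule that)
  obtain r' where r': "repair sig r' g'" and g'_db: "g' \<subseteq> db - g"
    and atoms': "\<forall>A\<in>g'. atom_of q A \<in> q0" and closed': "block_closed sig (db - g) g'"
    and avoid': "\<And>\<theta>. query_val \<theta> q \<subseteq> (db - g - g') \<union> r' \<Longrightarrow> query_val \<theta> q0 \<inter> r' = {}"
    using g' by (rule garbage_setE) (rule that)
  have r_sub: "r \<subseteq> g" and r'_sub: "r' \<subseteq> g'"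
    using r r' unfolding repair_def by blast+
  have "repair sig (r \<union> r') (g \<union> g')"
    using repair_Un[OF key_disjoint_if_block_closed[OF closed g'_db] r r'] .
  then show ?thesis
  proof (rule garbage_setI)
    show "g \<union> g' \<subseteq> db" and "\<forall>A\<in>g \<union> g'. atom_of q A \<in> q0"
      using g_db g'_db atoms atoms' by blast+
    show "block_closed sig db (g \<union> g')"
      using closed closed' by (rule block_closed_Un)
    fix \<theta> assume val: "query_val \<theta> q \<subseteq> (db - (g \<union> g')) \<union> (r \<union> r')"
    then have "query_val \<theta> q \<subseteq> (db - g) \<union> r"
      using g'_db r'_sub by blast
    then have r_avoided: "query_val \<theta> q0 \<inter> r = {}"
      by (rule avoid)
    then have "query_val \<theta> q \<inter> r = {}"
      using query_val_disjoint_if_subquery_disjoint[OF sjf] atoms r_sub by blast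
    then have "query_val \<theta> q \<subseteq> (db - g - g') \<union> r'"
      using val by blast
    then show "query_val \<theta> q0 \<inter> (r \<union> r') = {}"
      using avoid' r_avoided by blast
  qed
qed

theorem lemma17:
  fixes sig :: "'r \<Rightarrow> nat \<times> nat" and md :: "'r \<Rightarrow> mode"
    and q q0 :: "('r, 'v, 'c) atom set" and db g :: "('r, 'c) fact set"
  assumes "schema_ok sig"
    and "sjf_bcq sig q"
    and "q0 \<subseteq> q"
    and "database sig md q db"
    and "garbage_set sig q q0 db g"
  shows "(\<forall>g'. garbage_set sig q q0 (db - g) g' \<longrightarrow> g' = {}) \<longleftrightarrow> max_garbage_set sig q q0 db g"
proof
  assume no_garbage_left: "\<forall>g'. garbage_set sig q q0 (db - g) g' \<longrightarrow> g' = {}"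
  have closed: "block_closed sig db g"
    using assms(5) by (rule garbage_setE)
  have "U \<subseteq> g" if "garbage_set sig q q0 db U" for U
    using no_garbage_left garbage_set_Diff[OF closed that] by blast
  then show "max_garbage_set sig q q0 db g"
    using assms(5) unfolding max_garbage_set_def by blast
next
  assume "max_garbage_set sig q q0 db g"
  then have "g' \<subseteq> g" if "garbage_set sig q q0 (db - g) g'" for g'
    using garbage_set_Un[OF assms(2,5) that] unfolding max_garbage_set_def by blast
  moreover have "g' \<subseteq> db - g" if "garbage_set sig q q0 (db - g) g'" for g'
    using that by (rule garbage_setE)
  ultimately show "\<forall>g'. garbage_set sig q q0 (db - g) g' \<longrightarrow> g' = {}"
    by blast
qed

end
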